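(* Let $d\geq 2$ be even and $E,F\subset\mathbb F_q^d$. Then $$|\nu(0)|\leq q^{-1}|E||F|+2q^{d/2}|E|^{1/2}|F|^{1/2}.$$
   Context: $\mathbb F_q$ is a finite field with $q$ elements, of characteristic greater than two. For $m\in\mathbb F_q^d$, $\|m\|=m_1^2+\dots+m_d^2$, and $\nu(0)=|\{(x,y)\in E\times F:\|x-y\|=0\}|$. *)

theory Defs
  imports "HOL-Analysis.Analysis"
begin

text \<open>The "norm" of the paper: sum of squares of coordinates, a value in the field.\<close>
definition sqnorm :: "'a::comm_ring_1 ^ 'n \<Rightarrow> 'a" where
  "sqnorm m = (\<Sum>i\<in>UNIV. (m $ i) ^ 2)"

definition nu0 :: "('a::comm_ring_1 ^ 'n) set \<Rightarrow> ('a ^ 'n) set \<Rightarrow> nat" where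
  "nu0 E F = card {(x, y). x \<in> E \<and> y \<in> F \<and> sqnorm (x - y) = 0}"

end

theory Submission
  imports Defs "HOL-Computational_Algebra.Primes"
begin

text \<open>
  Fix a nontrivial additive character \<open>\<psi>\<close> of \<open>\<bbbF>\<^sub>q\<close>. Orthogonality in the scalar
  \<open>t\<close> gives \<open>q \<nu>(0) = \<Sum>t. W(t)\<close> with \<open>W(t) = \<Sum>x\<in>E. \<Sum>y\<in>F. \<psi>(t \<parallel>x - y\<parallel>)\<close>, and
  \<open>W(0) = |E| |F|\<close>. For \<open>t \<noteq> 0\<close> the difference \<open>\<parallel>x - y\<parallel> - \<parallel>x - y'\<parallel>\<close> is affine in \<open>x\<close>
  with linear part \<open>2 (y' - y)\<close>, nonzero for \<open>y \<noteq> y'\<close> because the characteristic is odd;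
  hence the functions \<open>x \<mapsto> \<psi>(t \<parallel>x - y\<parallel>)\<close>, \<open>y \<in> F\<close>, are orthogonal of squared norm
  \<open>q^d\<close>, and Cauchy-Schwarz in \<open>x\<close> yields \<open>|W(t)| \<le> q^(d/2) |E|^(1/2) |F|^(1/2)\<close>.
  This proves the bound with constant 1 in place of 2 and in every dimension. A nontrivial \<open>\<psi>\<close> is \<open>\<psi>(h + k a) = exp(2 \<pi> i k / p)\<close>,
  where \<open>H\<close> is a maximal proper additive subgroup and \<open>a \<notin> H\<close>.
\<close>

definition add_subgroup :: "'a::ab_group_add set \<Rightarrow> bool" where
  "add_subgroup H \<longleftrightarrow> 0 \<in> H \<and> (\<forall>x\<in>H. \<forall>y\<in>H. x + y \<in> H) \<and> (\<forall>x\<in>H. - x \<in> H)"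

lemma add_subgroup_of_int_mult:
  fixes H :: "'a::ring_1 set"
  assumes "add_subgroup H" "h \<in> H"
  shows "of_int k * h \<in> H"
proof -
  have nat: "of_nat n * h \<in> H" for n
    by (induction n) (use assms in \<open>auto simp: add_subgroup_def distrib_right\<close>)
  show ?thesis
  proof (cases "k \<ge> 0")
    case True
    then show ?thesis using nat[of "nat k"] by simp
  next
    case False
    then have "of_int k * h = - (of_nat (nat (- k)) * h)" by simp
    then show ?thesis using nat assms(1) unfolding add_subgroup_def by metis
  qed
qed

lemma add_subgroup_plus_multiples:
  fixes H :: "'a::ring_1 set"
  assumes H: "add_subgroup H"
  shows "add_subgroup {h + of_int k * a | h k. h \<in> H}"
  unfolding add_subgroup_def
proof (intro conjI ballI)
  have "0 = 0 + of_int 0 * a" "0 \<in> H" using H by (simp_all add: add_subgroup_def)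
  then show "0 \<in> {h + of_int k * a | h k. h \<in> H}" by blast
next
  fix x y assume "x \<in> {h + of_int k * a | h k. h \<in> H}" "y \<in> {h + of_int k * a | h k. h \<in> H}"
  then obtain h1 k1 h2 k2 where "h1 \<in> H" "h2 \<in> H" "x = h1 + of_int k1 * a" "y = h2 + of_int k2 * a"
    by auto
  then have "h1 + h2 \<in> H" "x + y = (h1 + h2) + of_int (k1 + k2) * a"
    using H by (auto simp: add_subgroup_def algebra_simps)
  then show "x + y \<in> {h + of_int k * a | h k. h \<in> H}" by blast
next
  fix x assume "x \<in> {h + of_int k * a | h k. h \<in> H}"
  then obtain h k where "h \<in> H" "x = h + of_int k * a" by auto
  then have "- h \<in> H" "- x = (- h) + of_int (- k) * a"
    using H by (auto simp: add_subgroup_def algebra_simps)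
  then show "- x \<in> {h + of_int k * a | h k. h \<in> H}" by blast
qed

text \<open>Take a maximal proper subgroup \<open>H\<close> and any \<open>a \<notin> H\<close>.\<close>
lemma ex_add_subgroup_cyclic_quotient:
  "\<exists>H (a::'a::{finite,ring_1}). add_subgroup H \<and> a \<notin> H \<and> (\<forall>x. \<exists>h\<in>H. \<exists>k. x = h + of_int k * a)"
proof -
  define proper where "proper = {H :: 'a set. add_subgroup H \<and> H \<noteq> UNIV}"
  have "{0::'a} \<noteq> UNIV"
  proof
    assume "{0::'a} = UNIV"
    then have "(1::'a) \<in> {0}" by simp
    then show False by simp
  qed
  then have "{0} \<in> proper" by (simp add: proper_def add_subgroup_def)
  then obtain H where H: "H \<in> proper" and max: "\<And>H'. H' \<in> proper \<Longrightarrow> H \<subseteq> H' \<Longrightarrow> H = H'"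
    using finite_has_maximal[of proper] by auto
  then obtain a where a: "a \<notin> H" by (auto simp: proper_def)
  define H' where "H' = {h + of_int k * a | h k. h \<in> H}"
  have "H \<subseteq> H'"
  proof
    fix h assume "h \<in> H"
    then show "h \<in> H'" unfolding H'_def by (intro CollectI exI[of _ h] exI[of _ 0]) simp
  qed
  moreover have "0 \<in> H" using H by (simp add: proper_def add_subgroup_def)
  then have "a \<in> H'" unfolding H'_def by (intro CollectI exI[of _ 0] exI[of _ 1]) simp
  moreover have "add_subgroup H'"
    using H add_subgroup_plus_multiples unfolding H'_def proper_def by blast
  ultimately have "H' = UNIV"
    using max[of H'] a unfolding proper_def by blast
  then show ?thesis using H a unfolding H'_def proper_def by blast
qed

lemma of_int_mult_mem_add_subgroup_imp_dvd:
  fixes H :: "'a::ring_1 set"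
  assumes "prime CHAR('a)" "add_subgroup H" "a \<notin> H" "of_int j * a \<in> H"
  shows "int CHAR('a) dvd j"
proof (rule ccontr)
  assume "\<not> int CHAR('a) dvd j"
  then have "coprime (int CHAR('a)) j"
    using assms(1) by (simp add: prime_imp_coprime)
  then obtain u v where uv: "u * j + v * int CHAR('a) = 1"
    using bezout_int[of j "int CHAR('a)"] by (auto simp: coprime_iff_gcd_eq_1 gcd.commute)
  have "a = of_int (u * j + v * int CHAR('a)) * a" using uv by simp
  also have "\<dots> = of_int u * (of_int j * a)"
    by (simp add: distrib_right mult.assoc)
  finally show False
    using add_subgroup_of_int_mult[OF assms(2,4)] assms(3) by metis
qed

lemma cis_2pi_div_cong:
  fixes p :: nat and k k' :: int
  assumes "p > 0" "int p dvd k - k'"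
  shows "cis (2 * pi * k / p) = cis (2 * pi * k' / p)"
proof -
  obtain m where "k - k' = int p * m" using assms(2) by (auto simp: dvd_def)
  then have "2 * pi * k / p = 2 * pi * k' / p + 2 * pi * m"
    using assms(1) by (simp add: field_simps)
  then show ?thesis by (simp add: cis_mult[symmetric])
qed

lemma cis_2pi_div_neq_1:
  fixes p :: nat
  assumes "p \<ge> 2"
  shows "cis (2 * pi / p) \<noteq> 1"
proof
  assume "cis (2 * pi / p) = 1"
  then have "cos (2 * pi / p) = 1" by (metis cis.sel(1) one_complex.sel(1))
  then obtain n :: int where "2 * pi / p = real_of_int n * 2 * pi" using cos_one_2pi_int by blast
  then have n: "real_of_int n * p = 1" using assms by (simp add: field_simps)
  show False
  proof (cases "n \<le> 0")
    case True
    then have "real_of_int n * p \<le> 0" by (simp add: mult_nonpos_nonneg)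
    then show False using n by simp
  next
    case False
    then have "real_of_int n * p \<ge> 1 * 2" using assms by (intro mult_mono) auto
    then show False using n by simp
  qed
qed

lemma ex_nontrivial_additive_character:
  assumes "prime CHAR('a::{finite,ring_1})"
  shows "\<exists>\<psi> :: 'a \<Rightarrow> complex. (\<forall>x y. \<psi> (x + y) = \<psi> x * \<psi> y) \<and> (\<forall>x. norm (\<psi> x) = 1) \<and> (\<exists>a. \<psi> a \<noteq> 1)"
proof -
  obtain H and a :: 'a where H: "add_subgroup H" and a: "a \<notin> H"
    and span: "\<And>x. \<exists>h\<in>H. \<exists>k. x = h + of_int k * a"
    using ex_add_subgroup_cyclic_quotient by blast
  define p where "p = CHAR('a)"
  have p: "p \<ge> 2" using assms unfolding p_def by (simp add: prime_ge_2_nat)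
  have coord_unique: "int p dvd k - k'"
    if "h + of_int k * a = h' + of_int k' * a" "h \<in> H" "h' \<in> H" for h h' k k'
  proof -
    have "of_int (k - k') * a = h' + - h" using that(1) by (simp add: algebra_simps)
    also have "\<dots> \<in> H" using H that(2,3) unfolding add_subgroup_def by blast
    finally show ?thesis
      using of_int_mult_mem_add_subgroup_imp_dvd[OF assms H a] unfolding p_def by blast
  qed
  define coord where "coord x = (SOME k. \<exists>h\<in>H. x = h + of_int k * a)" for x
  have coord: "\<exists>h\<in>H. x = h + of_int (coord x) * a" for x
  proof -
    have "\<exists>k. \<exists>h\<in>H. x = h + of_int k * a" using span[of x] by blast
    then show ?thesis unfolding coord_def by (rule someI_ex)
  qed
  define \<psi> where "\<psi> x = cis (2 * pi * coord x / p)" for x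
  have "\<psi> (x + y) = \<psi> x * \<psi> y" for x y
  proof -
    obtain hx hy hxy where "hx \<in> H" "hy \<in> H" "hxy \<in> H"
      and ex: "x = hx + of_int (coord x) * a" and ey: "y = hy + of_int (coord y) * a"
      and exy: "x + y = hxy + of_int (coord (x + y)) * a"
      using coord by meson
    have "hxy + of_int (coord (x + y)) * a = x + y" using exy by simp
    also have "\<dots> = (hx + of_int (coord x) * a) + (hy + of_int (coord y) * a)"
      using ex ey by (rule arg_cong2)
    also have "\<dots> = (hx + hy) + of_int (coord x + coord y) * a" by (simp add: algebra_simps)
    finally have "hxy + of_int (coord (x + y)) * a = (hx + hy) + of_int (coord x + coord y) * a" .
    moreover have "hx + hy \<in> H" using H \<open>hx \<in> H\<close> \<open>hy \<in> H\<close> by (simp add: add_subgroup_def)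
    ultimately have "int p dvd coord (x + y) - (coord x + coord y)"
      using coord_unique \<open>hxy \<in> H\<close> by blast
    then have "\<psi> (x + y) = cis (2 * pi * (coord x + coord y) / p)"
      unfolding \<psi>_def using cis_2pi_div_cong p by simp
    then show ?thesis
      by (simp add: \<psi>_def cis_mult add_divide_distrib distrib_left)
  qed
  moreover have "\<psi> a \<noteq> 1"
  proof -
    obtain h where "h \<in> H" "0 + of_int 1 * a = h + of_int (coord a) * a"
      using coord[of a] by auto
    moreover have "0 \<in> H" using H by (simp add: add_subgroup_def)
    ultimately have "int p dvd 1 - coord a"
      using coord_unique by blast
    then have "\<psi> a = cis (2 * pi / p)"
      unfolding \<psi>_def using cis_2pi_div_cong[of p 1 "coord a"] p by simp
    then show ?thesis using cis_2pi_div_neq_1 p by simp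
  qed
  moreover have "norm (\<psi> x) = 1" for x by (simp add: \<psi>_def)
  ultimately show ?thesis by blast
qed

lemma sqnorm_diff_sqnorm:
  fixes x y y' :: "'a::comm_ring_1 ^ 'n"
  shows "sqnorm (x - y) - sqnorm (x - y') = sqnorm y - sqnorm y' + 2 * (\<Sum>i\<in>UNIV. x $ i * (y' - y) $ i)"
proof -
  have "(x$i - y$i)^2 - (x$i - y'$i)^2 = (y$i^2 - y'$i^2) + 2 * (x$i * (y'$i - y$i))" for i
    by (simp add: power2_eq_square algebra_simps)
  then have "sqnorm (x - y) - sqnorm (x - y') = (\<Sum>i\<in>UNIV. (y$i^2 - y'$i^2) + 2 * (x$i * (y'$i - y$i)))"
    unfolding sqnorm_def by (simp add: sum_subtractf[symmetric])
  then show ?thesis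
    unfolding sqnorm_def by (simp add: sum.distrib sum_subtractf sum_distrib_left)
qed

lemma nu0_eq_sum:
  fixes E F :: "('a::comm_ring_1 ^ 'n) set"
  assumes "finite E" "finite F"
  shows "of_nat (nu0 E F) = (\<Sum>x\<in>E. \<Sum>y\<in>F. if sqnorm (x - y) = 0 then 1 else (0 :: 'b::semiring_1))"
proof -
  have "{(x, y). x \<in> E \<and> y \<in> F \<and> sqnorm (x - y) = 0} = {z \<in> E \<times> F. sqnorm (fst z - snd z) = 0}"
    by auto
  then have "nu0 E F = card {z \<in> E \<times> F. sqnorm (fst z - snd z) = 0}"
    unfolding nu0_def by simp
  also have "\<dots> = (\<Sum>z\<in>E \<times> F. if sqnorm (fst z - snd z) = 0 then 1 else 0)"
    by (subst card_eq_sum, rule sum.inter_filter) (simp add: assms)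
  finally show ?thesis
    unfolding sum.cartesian_product by (auto simp: of_nat_sum case_prod_unfold intro!: sum.cong)
qed

locale additive_character =
  fixes \<psi> :: "'a::{finite,field} \<Rightarrow> complex"
  assumes character_add: "\<psi> (x + y) = \<psi> x * \<psi> y"
    and norm_character: "norm (\<psi> x) = 1"
    and nontrivial: "\<exists>a. \<psi> a \<noteq> 1"
begin

lemma character_zero: "\<psi> 0 = 1"
  using character_add[of 0 0] norm_character[of 0] by auto

lemma character_diff: "\<psi> (x - y) = \<psi> x * cnj (\<psi> y)"
proof -
  have "\<psi> (x - y) * (\<psi> y * cnj (\<psi> y)) = \<psi> x * cnj (\<psi> y)"
    using character_add[of "x - y" y] by (simp add: mult.assoc)
  moreover have "\<psi> y * cnj (\<psi> y) = 1"
    using norm_character[of y] by (simp add: complex_norm_square[symmetric])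
  ultimately show ?thesis by simp
qed

lemma sum_character_hom_eq_0:
  fixes L :: "'v::{finite,ab_group_add} \<Rightarrow> 'a"
  assumes "\<And>x y. L (x + y) = L x + L y" "\<psi> (L w) \<noteq> 1"
  shows "(\<Sum>x\<in>UNIV. \<psi> (L x)) = 0"
proof -
  have "(\<Sum>x\<in>UNIV. \<psi> (L x)) = (\<Sum>x\<in>UNIV. \<psi> (L (x + w)))"
    by (rule sum.reindex_bij_betw[symmetric]) (rule bij_betwI[where g="\<lambda>x. x - w"], auto)
  also have "\<dots> = \<psi> (L w) * (\<Sum>x\<in>UNIV. \<psi> (L x))"
    by (simp add: assms(1) character_add sum_distrib_left mult.commute)
  finally have "(1 - \<psi> (L w)) * (\<Sum>x\<in>UNIV. \<psi> (L x)) = 0" by (simp add: algebra_simps)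
  then show ?thesis using assms(2) by simp
qed

lemma sum_character_mult: "(\<Sum>t\<in>UNIV. \<psi> (t * u)) = (if u = 0 then of_nat CARD('a) else 0)"
proof (cases "u = 0")
  case False
  obtain a where "\<psi> a \<noteq> 1" using nontrivial by blast
  then have "(\<Sum>t\<in>UNIV. \<psi> (t * u)) = 0"
    using False by (intro sum_character_hom_eq_0[where w="a / u"]) (auto simp: distrib_right)
  then show ?thesis using False by simp
qed (simp add: character_zero)

lemma sum_character_inner_eq_0:
  fixes v :: "'a ^ 'n"
  assumes "c \<noteq> 0" "v \<noteq> 0"
  shows "(\<Sum>x\<in>UNIV. \<psi> (c * (\<Sum>i\<in>UNIV. x $ i * v $ i))) = 0"
proof -
  obtain a where a: "\<psi> a \<noteq> 1" using nontrivial by blast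
  obtain j where j: "v $ j \<noteq> 0" using assms(2) by (metis vec_eq_iff zero_index)
  define w :: "'a ^ 'n" where "w = (\<chi> i. if i = j then a / (c * v $ j) else 0)"
  have "(\<Sum>i\<in>UNIV. w $ i * v $ i) = (\<Sum>i\<in>UNIV. if i = j then a / (c * v $ j) * v $ j else 0)"
    unfolding w_def by (intro sum.cong) auto
  then have "(\<Sum>i\<in>UNIV. w $ i * v $ i) = a / (c * v $ j) * v $ j" by simp
  then have "c * (\<Sum>i\<in>UNIV. w $ i * v $ i) = a" using assms(1) j by (simp add: field_simps)
  then show ?thesis
    using a by (intro sum_character_hom_eq_0[where w=w]) (auto simp: distrib_right sum.distrib distrib_left)
qed

lemma sum_character_sqnorm_orthogonal:
  fixes y y' :: "'a ^ 'n"
  assumes "t \<noteq> 0" "(2::'a) \<noteq> 0"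
  shows "(\<Sum>x\<in>UNIV. \<psi> (t * sqnorm (x - y)) * cnj (\<psi> (t * sqnorm (x - y')))) =
    (if y = y' then of_nat CARD('a ^ 'n) else 0)"
proof (cases "y = y'")
  case True
  then show ?thesis using norm_character by (simp add: complex_norm_square[symmetric])
next
  case False
  have "t * sqnorm (x - y) - t * sqnorm (x - y') =
      t * (sqnorm y - sqnorm y') + (2 * t) * (\<Sum>i\<in>UNIV. x $ i * (y' - y) $ i)" for x
    using arg_cong[OF sqnorm_diff_sqnorm[of x y y'], of "(*) t"] by (simp add: algebra_simps)
  then have "(\<Sum>x\<in>UNIV. \<psi> (t * sqnorm (x - y)) * cnj (\<psi> (t * sqnorm (x - y')))) =
      \<psi> (t * (sqnorm y - sqnorm y')) * (\<Sum>x\<in>UNIV. \<psi> ((2 * t) * (\<Sum>i\<in>UNIV. x $ i * (y' - y) $ i)))"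
    by (simp add: character_diff[symmetric] character_add sum_distrib_left)
  also have "\<dots> = 0"
    using sum_character_inner_eq_0[of "2 * t" "y' - y"] assms False by simp
  finally show ?thesis using False by simp
qed

lemma sum_cmod_sum_character_sqnorm:
  fixes F :: "('a ^ 'n) set"
  assumes "t \<noteq> 0" "(2::'a) \<noteq> 0"
  shows "(\<Sum>x\<in>UNIV. (cmod (\<Sum>y\<in>F. \<psi> (t * sqnorm (x - y))))\<^sup>2) = real CARD('a ^ 'n) * real (card F)"
proof -
  have "complex_of_real (\<Sum>x\<in>UNIV. (cmod (\<Sum>y\<in>F. \<psi> (t * sqnorm (x - y))))\<^sup>2) =
      (\<Sum>x\<in>UNIV. \<Sum>y\<in>F. \<Sum>y'\<in>F. \<psi> (t * sqnorm (x - y)) * cnj (\<psi> (t * sqnorm (x - y'))))"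
    unfolding of_real_sum complex_norm_square cnj_sum sum_product ..
  also have "\<dots> = (\<Sum>y\<in>F. \<Sum>y'\<in>F. \<Sum>x\<in>UNIV. \<psi> (t * sqnorm (x - y)) * cnj (\<psi> (t * sqnorm (x - y'))))"
    by (subst sum.swap) (simp add: sum.swap[of _ UNIV])
  also have "\<dots> = (\<Sum>y\<in>F. \<Sum>y'\<in>F. if y = y' then of_nat CARD('a ^ 'n) else 0)"
    using assms by (simp add: sum_character_sqnorm_orthogonal)
  also have "\<dots> = complex_of_real (real CARD('a ^ 'n) * real (card F))"
    by (simp add: sum.delta)
  finally show ?thesis by (simp only: of_real_eq_iff)
qed

lemma cmod_sum_character_sqnorm_le:
  fixes E F :: "('a ^ 'n) set"
  assumes "t \<noteq> 0" "(2::'a) \<noteq> 0"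
  shows "cmod (\<Sum>x\<in>E. \<Sum>y\<in>F. \<psi> (t * sqnorm (x - y))) \<le>
    sqrt (real (card E)) * sqrt (real CARD('a ^ 'n) * real (card F))"
proof -
  define f where "f x = cmod (\<Sum>y\<in>F. \<psi> (t * sqnorm (x - y)))" for x
  have "cmod (\<Sum>x\<in>E. \<Sum>y\<in>F. \<psi> (t * sqnorm (x - y))) \<le> (\<Sum>x\<in>E. f x)"
    unfolding f_def by (rule norm_sum)
  also have "\<dots> \<le> sqrt ((\<Sum>x\<in>E. (f x)\<^sup>2) * card E)"
    using sum_squared_le_sum_of_squares[of f E] real_le_rsqrt by blast
  also have "(\<Sum>x\<in>E. (f x)\<^sup>2) \<le> (\<Sum>x\<in>UNIV. (f x)\<^sup>2)"
    by (rule sum_mono2) auto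
  also have "(\<Sum>x\<in>UNIV. (f x)\<^sup>2) = real CARD('a ^ 'n) * real (card F)"
    unfolding f_def using assms by (rule sum_cmod_sum_character_sqnorm)
  finally show ?thesis
    by (simp add: real_sqrt_mult mult.commute mult_right_mono)
qed

lemma nu0_eq_sum_character:
  fixes E F :: "('a ^ 'n) set"
  shows "of_nat CARD('a) * of_nat (nu0 E F) = (\<Sum>t\<in>UNIV. \<Sum>x\<in>E. \<Sum>y\<in>F. \<psi> (t * sqnorm (x - y)))"
proof -
  have "of_nat CARD('a) * of_nat (nu0 E F) =
      (\<Sum>x\<in>E. \<Sum>y\<in>F. \<Sum>t\<in>UNIV. \<psi> (t * sqnorm (x - y)))"
    by (simp add: nu0_eq_sum sum_distrib_left sum_character_mult if_distrib cong: if_cong)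
  also have "\<dots> = (\<Sum>t\<in>UNIV. \<Sum>x\<in>E. \<Sum>y\<in>F. \<psi> (t * sqnorm (x - y)))"
    by (subst sum.swap) (simp add: sum.swap[of _ UNIV])
  finally show ?thesis .
qed

lemma nu0_le:
  fixes E F :: "('a ^ 'n) set"
  assumes "(2::'a) \<noteq> 0"
  shows "real (nu0 E F) \<le> real (card E) * real (card F) / real CARD('a)
    + sqrt (real CARD('a ^ 'n)) * sqrt (real (card E)) * sqrt (real (card F))"
proof -
  define q where "q = CARD('a)"
  define W where "W t = (\<Sum>x\<in>E. \<Sum>y\<in>F. \<psi> (t * sqnorm (x - y)))" for t
  define B where "B = sqrt (real CARD('a ^ 'n)) * sqrt (real (card E)) * sqrt (real (card F))"
  have W_le: "cmod (W t) \<le> B" if "t \<noteq> 0" for t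
    using cmod_sum_character_sqnorm_le[OF that assms, where E=E and F=F]
    by (simp add: W_def B_def real_sqrt_mult mult_ac)
  define R where "R = (\<Sum>t\<in>UNIV - {0}. W t)"
  have "of_nat q * of_nat (nu0 E F) = W 0 + R"
    unfolding q_def R_def W_def nu0_eq_sum_character by (rule sum.remove) auto
  also have "W 0 = of_nat (card E * card F)"
    by (simp add: W_def character_zero)
  finally have "real q * real (nu0 E F) = real (card E * card F) + Re R"
    by (metis Re_complex_of_real of_nat_mult of_real_of_nat_eq plus_complex.sel(1))
  also have "\<dots> \<le> real (card E * card F) + (\<Sum>t\<in>UNIV - {0}. cmod (W t))"
    unfolding R_def using complex_Re_le_cmod order_trans[OF _ norm_sum] by (intro add_left_mono) blast
  also have "(\<Sum>t\<in>UNIV - {0}. cmod (W t)) \<le> real (card (UNIV - {0::'a})) * B"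
    using W_le by (intro sum_bounded_above) simp
  also have "\<dots> \<le> real q * B"
    unfolding q_def B_def by (intro mult_right_mono card_mono) auto
  finally have "real q * real (nu0 E F) \<le> real q * (real (card E) * real (card F) / real q + B)"
    unfolding q_def by (simp add: algebra_simps)
  then show ?thesis
    unfolding q_def B_def by (simp add: mult_le_cancel_left_pos)
qed

end

theorem mainTheorem9:
  fixes E F :: "('a::{finite,field} ^ 'n) set"
  assumes "CHAR('a) > 2"
    and "CARD('n) \<ge> 2" and "even CARD('n)"
  shows "real (nu0 E F) \<le>
           real (card E) * real (card F) / real CARD('a)
           + 2 * real CARD('a) powr (real CARD('n) / 2) * sqrt (real (card E)) * sqrt (real (card F))"
proof -
  have "prime CHAR('a)"
    using assms(1) by (intro prime_CHAR_semidom) simp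
  then obtain \<psi> :: "'a \<Rightarrow> complex" where \<psi>: "additive_character \<psi>"
    using ex_nontrivial_additive_character unfolding additive_character_def by blast
  have "(2::'a) \<noteq> 0"
    using assms(1) of_nat_eq_0_iff_char_dvd[of 2, where 'a='a] by (auto dest: dvd_imp_le)
  then have "real (nu0 E F) \<le> real (card E) * real (card F) / real CARD('a)
      + sqrt (real CARD('a ^ 'n)) * sqrt (real (card E)) * sqrt (real (card F))"
    by (rule additive_character.nu0_le[OF \<psi>])
  also have "sqrt (real CARD('a ^ 'n)) = real CARD('a) powr (real CARD('n) / 2)"
    by (simp add: powr_half_sqrt_powr powr_realpow)
  also have "real CARD('a) powr (real CARD('n) / 2) * sqrt (real (card E)) * sqrt (real (card F))
      \<le> 2 * real CARD('a) powr (real CARD('n) / 2) * sqrt (real (card E)) * sqrt (real (card F))"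
    by (simp add: mult.assoc)
  finally show ?thesis by simp
qed

end
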